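(* Consider a generalized Nash equilibrium problem with $N$ players in which the $i$th player, given the other players' strategies $x_{-i}$, solves \[ \min_{x_i\in\mathbb{R}^{n_i}} f_i(x_i,x_{-i})\quad\text{s.t.}\quad g_i(x_i,x_{-i})\ge 0, \] where $f_i$ and the components of $g_i=(g_{i,1},\dots,g_{i,s_i})$ are real polynomials in $x=(x_1,\dots,x_N)\in\mathbb{R}^n$, $n=n_1+\cdots+n_N$. Let $\{x^{(k)}\}$ be a sequence produced by the following Gauss–Seidel scheme: start from a feasible point $x^{(0)}$ and a parameter $\tau^{(0)}>0$; for $k=0,1,2,\dots$ and $i=1,\dots,N$ in order, let $x_i^{(k+1)}$ be a global minimizer of \[ \min_{x_i\in\mathbb{R}^{n_i}}\ f_i(x_1^{(k+1)},\dots,x_{i-1}^{(k+1)},x_i,x_{i+1}^{(k)},\dots,x_N^{(k)})+\tau^{(k)}\|x_i-x_i^{(k)}\|^2 \] subject to $g_i(x_1^{(k+1)},\dots,x_{i-1}^{(k+1)},x_i,x_{i+1}^{(k)},\dots,x_N^{(k)})\ge 0$; then choose $\tau^{(k+1)}\in[0,\tau^{(k)}]$ and set $x^{(k+1)}=(x_1^{(k+1)},\dots,x_N^{(k+1)})$. Assume $x^{(k)}\to x^*$ and $\tau^{(k)}\to 0$. If for each $i$ the set-valued map $G_i: x_{-i}\mapsto X_i(x_{-i})$ is inner semicontinuous relative to its domain $\operatorname{dom}G_i$, then $x^*$ is a generalized Nash equilibrium of the problem.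
   Context: For $x=(x_1,\dots,x_N)$, $x_{-i}$ denotes $(x_1,\dots,x_{i-1},x_{i+1},\dots,x_N)$ and $(y,x_{-i})$ denotes the vector whose $i$th block is $y$ and other blocks are those of $x_{-i}$. The feasible set of player $i$ is $X_i(x_{-i})=\{x_i\in\mathbb{R}^{n_i}: g_i(x_i,x_{-i})\ge 0\}$ (componentwise inequality). A generalized Nash equilibrium (GNE) is a point $x$ such that for each $i$, $x_i$ is a minimizer of player $i$'s problem with $x_{-i}$ fixed. The domain of $G_i$ is the set of $x_{-i}$ with $X_i(x_{-i})\neq\emptyset$. A set-valued map $G$ is inner semicontinuous at $z\in\operatorname{dom}G$ relative to $\operatorname{dom}G$ if for every $w\in G(z)$ and every sequence $z_\ell\in\operatorname{dom}G$ with $z_\ell\to z$ there exist $w_\ell\in G(z_\ell)$ with $w_\ell\to w$; it is inner semicontinuous relative to $\operatorname{dom}G$ if this holds at all points of $\operatorname{dom}G$. *)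

theory Defs
  imports "HOL-Analysis.Analysis"
begin

text \<open>The whole strategy profile x = (x_1,...,x_N) is a point of real^'n (n = CARD('n)).
  The coordinates are partitioned into player blocks by blk :: 'n => nat, coordinate c
  belonging to player blk c (players are 0,...,N-1). A point of R^{n_i} is represented
  by a vector of real^'n supported on block i, and x_{-i} by a vector vanishing on block i.\<close>

inductive poly_fun :: "(real^'n \<Rightarrow> real) \<Rightarrow> bool" where
  poly_const: "poly_fun (\<lambda>x. c)"
| poly_coord: "poly_fun (\<lambda>x. x $ k)"
| poly_add: "poly_fun p \<Longrightarrow> poly_fun q \<Longrightarrow> poly_fun (\<lambda>x. p x + q x)"
| poly_mult: "poly_fun p \<Longrightarrow> poly_fun q \<Longrightarrow> poly_fun (\<lambda>x. p x * q x)"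

definition blk_part :: "('n \<Rightarrow> nat) \<Rightarrow> nat \<Rightarrow> real^'n \<Rightarrow> real^'n" where
  "blk_part blk i x = (\<chi> c. if blk c = i then x $ c else 0)"

definition blk_rest :: "('n \<Rightarrow> nat) \<Rightarrow> nat \<Rightarrow> real^'n \<Rightarrow> real^'n" where
  "blk_rest blk i x = (\<chi> c. if blk c = i then 0 else x $ c)"

text \<open>Feasible set X_i(x_{-i}) of player i; z plays the role of x_{-i}; the point (y,x_{-i}) is y + z.\<close>
definition feas_set ::
  "('n \<Rightarrow> nat) \<Rightarrow> (nat \<Rightarrow> nat) \<Rightarrow> (nat \<Rightarrow> nat \<Rightarrow> real^'n \<Rightarrow> real) \<Rightarrow> nat \<Rightarrow> real^'n \<Rightarrow> (real^'n) set"
  where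
  "feas_set blk s g i z = {y. blk_part blk i y = y \<and> (\<forall>j<s i. g i j (y + z) \<ge> 0)}"

definition dom_G ::
  "('n \<Rightarrow> nat) \<Rightarrow> (nat \<Rightarrow> nat) \<Rightarrow> (nat \<Rightarrow> nat \<Rightarrow> real^'n \<Rightarrow> real) \<Rightarrow> nat \<Rightarrow> (real^'n) set"
  where
  "dom_G blk s g i = {z. blk_rest blk i z = z \<and> feas_set blk s g i z \<noteq> {}}"

definition inner_semicont_rel ::
  "('a::topological_space \<Rightarrow> 'b::topological_space set) \<Rightarrow> 'a set \<Rightarrow> bool" where
  "inner_semicont_rel G D \<longleftrightarrow>
     (\<forall>z\<in>D. \<forall>w\<in>G z. \<forall>zs. (\<forall>l. zs l \<in> D) \<and> zs \<longlonglongrightarrow> z \<longrightarrow>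
        (\<exists>ws. (\<forall>l. ws l \<in> G (zs l)) \<and> ws \<longlonglongrightarrow> w))"

definition is_GNE ::
  "nat \<Rightarrow> ('n \<Rightarrow> nat) \<Rightarrow> (nat \<Rightarrow> real^'n \<Rightarrow> real) \<Rightarrow> (nat \<Rightarrow> nat) \<Rightarrow>
   (nat \<Rightarrow> nat \<Rightarrow> real^'n \<Rightarrow> real) \<Rightarrow> real^'n \<Rightarrow> bool" where
  "is_GNE N blk f s g x \<longleftrightarrow>
     (\<forall>i<N. blk_part blk i x \<in> feas_set blk s g i (blk_rest blk i x) \<and>
        (\<forall>y\<in>feas_set blk s g i (blk_rest blk i x).
            f i x \<le> f i (y + blk_rest blk i x)))"

definition gs_point :: "('n \<Rightarrow> nat) \<Rightarrow> (nat \<Rightarrow> real^'n) \<Rightarrow> nat \<Rightarrow> nat \<Rightarrow> real^'n" where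
  "gs_point blk xs k i = (\<chi> c. if blk c < i then xs (Suc k) $ c else xs k $ c)"

end

theory Submission
  imports Defs
begin

text \<open>In sweep k player i answered w_k = x_i^{(k+1)} to the other blocks
  z_k of the current Gauss-Seidel point; both converge to the blocks of x*, so x*_i is feasible
  at x*_{-i} because continuity of g_i makes the graph of G_i closed. For y feasible at x*_{-i},
  inner semicontinuity provides y_k feasible at z_k with y_k converging to y. Comparing the proximal
  objective at w_k and at y_k, the proximal terms vanish in the limit since \<tau>_k tends to 0 and all
  sequences converge, leaving f_i(x*) \<le> f_i(y, x*_{-i}).\<close>

lemma poly_fun_isCont: "poly_fun p \<Longrightarrow> isCont p x"
  by (induction rule: poly_fun.induct) (auto intro!: continuous_intros)

lemma blk_part_add_blk_rest: "blk_part blk i x + blk_rest blk i x = x"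
  by (simp add: blk_part_def blk_rest_def vec_eq_iff)

lemma blk_rest_idem: "blk_rest blk i (blk_rest blk i x) = blk_rest blk i x"
  by (simp add: blk_rest_def vec_eq_iff)

lemma tendsto_blk_part:
  "(X \<longlongrightarrow> L) F \<Longrightarrow> ((\<lambda>k. blk_part blk i (X k)) \<longlongrightarrow> blk_part blk i L) F"
  unfolding blk_part_def by (intro tendsto_vec_lambda) (auto intro: tendsto_vec_nth)

lemma tendsto_blk_rest:
  "(X \<longlongrightarrow> L) F \<Longrightarrow> ((\<lambda>k. blk_rest blk i (X k)) \<longlongrightarrow> blk_rest blk i L) F"
  unfolding blk_rest_def by (intro tendsto_vec_lambda) (auto intro: tendsto_vec_nth)

lemma tendsto_gs_point:
  assumes "xs \<longlonglongrightarrow> x"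
  shows "(\<lambda>k. gs_point blk xs k i) \<longlonglongrightarrow> x"
proof -
  have Suc_lim: "(\<lambda>k. xs (Suc k)) \<longlonglongrightarrow> x"
    using assms by (rule LIMSEQ_Suc)
  have "(\<lambda>k. \<chi> c. if blk c < i then xs (Suc k) $ c else xs k $ c) \<longlonglongrightarrow> (\<chi> c. x $ c)"
  proof (intro tendsto_vec_lambda)
    fix c
    show "(\<lambda>k. if blk c < i then xs (Suc k) $ c else xs k $ c) \<longlonglongrightarrow> x $ c"
      using Suc_lim assms by (cases "blk c < i") (simp_all add: tendsto_vec_nth)
  qed
  then show ?thesis
    unfolding gs_point_def by simp
qed

lemma feas_set_in_dom_G:
  "y \<in> feas_set blk s g i (blk_rest blk i x) \<Longrightarrow> blk_rest blk i x \<in> dom_G blk s g i"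
  unfolding dom_G_def by (auto simp: blk_rest_idem)

lemma feas_set_closed_graph:
  assumes g_cont: "\<And>j x. j < s i \<Longrightarrow> isCont (g i j) x"
    and feas: "\<And>k. w k \<in> feas_set blk s g i (z k)"
    and w_lim: "w \<longlonglongrightarrow> w0" and z_lim: "z \<longlonglongrightarrow> z0"
  shows "w0 \<in> feas_set blk s g i z0"
  unfolding feas_set_def
proof (intro CollectI conjI allI impI)
  have "w = (\<lambda>k. blk_part blk i (w k))"
    using feas by (auto simp: feas_set_def)
  then have "w \<longlonglongrightarrow> blk_part blk i w0"
    using tendsto_blk_part[OF w_lim] by metis
  then show "blk_part blk i w0 = w0"
    using w_lim by (rule LIMSEQ_unique)
next
  fix j assume j: "j < s i"
  have "(\<lambda>k. g i j (w k + z k)) \<longlonglongrightarrow> g i j (w0 + z0)"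
    using g_cont[OF j] tendsto_add[OF w_lim z_lim] by (rule isCont_tendsto_compose)
  moreover have "\<forall>k. g i j (w k + z k) \<ge> 0"
    using feas j by (auto simp: feas_set_def)
  ultimately show "g i j (w0 + z0) \<ge> 0"
    by (intro LIMSEQ_le_const) auto
qed

lemma proximal_minimizers_limit_minimal:
  fixes G :: "'a::real_normed_vector \<Rightarrow> 'a set" and F :: "'a \<Rightarrow> real"
  assumes isc: "inner_semicont_rel G D"
    and z_in: "\<And>k. z k \<in> D" and z0_in: "z0 \<in> D" and z_lim: "z \<longlonglongrightarrow> z0"
    and w_lim: "w \<longlonglongrightarrow> w0" and c_lim: "c \<longlonglongrightarrow> c0"
    and \<tau>_lim: "\<tau> \<longlonglongrightarrow> 0" and \<tau>_nonneg: "\<And>k. \<tau> k \<ge> 0"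
    and F_cont: "\<And>x. isCont F x"
    and prox_min: "\<And>k y. y \<in> G (z k) \<Longrightarrow>
      F (w k + z k) + \<tau> k * (norm (w k - c k))\<^sup>2 \<le> F (y + z k) + \<tau> k * (norm (y - c k))\<^sup>2"
    and y_in: "y \<in> G z0"
  shows "F (w0 + z0) \<le> F (y + z0)"
proof -
  obtain ys where ys_in: "\<And>k. ys k \<in> G (z k)" and ys_lim: "ys \<longlonglongrightarrow> y"
    using isc z0_in y_in z_in z_lim unfolding inner_semicont_rel_def by blast
  have le: "F (w k + z k) \<le> F (ys k + z k) + \<tau> k * (norm (ys k - c k))\<^sup>2" for k
  proof -
    have "0 \<le> \<tau> k * (norm (w k - c k))\<^sup>2"
      using \<tau>_nonneg by simp
    then show ?thesis
      using prox_min[OF ys_in, of k] by linarith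
  qed
  have "(\<lambda>k. F (w k + z k)) \<longlonglongrightarrow> F (w0 + z0)"
    using F_cont tendsto_add[OF w_lim z_lim] by (rule isCont_tendsto_compose)
  moreover have "(\<lambda>k. F (ys k + z k) + \<tau> k * (norm (ys k - c k))\<^sup>2)
      \<longlonglongrightarrow> F (y + z0) + 0 * (norm (y - c0))\<^sup>2"
    using isCont_tendsto_compose[OF F_cont tendsto_add[OF ys_lim z_lim]] \<tau>_lim ys_lim c_lim
    by (intro tendsto_add tendsto_mult tendsto_power tendsto_norm tendsto_diff)
  ultimately show ?thesis
    using le by (simp add: LIMSEQ_le)
qed

theorem theorem3p7:
  fixes N :: nat
    and blk :: "'n::finite \<Rightarrow> nat"
    and f :: "nat \<Rightarrow> real^'n \<Rightarrow> real"
    and s :: "nat \<Rightarrow> nat"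
    and g :: "nat \<Rightarrow> nat \<Rightarrow> real^'n \<Rightarrow> real"
    and xs :: "nat \<Rightarrow> real^'n"
    and \<tau> :: "nat \<Rightarrow> real"
    and xstar :: "real^'n"
  assumes blk_range: "\<forall>c. blk c < N"
    and f_poly: "\<forall>i<N. poly_fun (f i)"
    and g_poly: "\<forall>i<N. \<forall>j<s i. poly_fun (g i j)"
    and x0_feas: "\<forall>i<N. \<forall>j<s i. g i j (xs 0) \<ge> 0"
    and tau0: "\<tau> 0 > 0"
    and tau_step: "\<forall>k. 0 \<le> \<tau> (Suc k) \<and> \<tau> (Suc k) \<le> \<tau> k"
    and gs_min: "\<forall>k. \<forall>i<N.
        blk_part blk i (xs (Suc k)) \<in> feas_set blk s g i (blk_rest blk i (gs_point blk xs k i)) \<and>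
        (\<forall>y\<in>feas_set blk s g i (blk_rest blk i (gs_point blk xs k i)).
           f i (blk_part blk i (xs (Suc k)) + blk_rest blk i (gs_point blk xs k i))
             + \<tau> k * (norm (blk_part blk i (xs (Suc k)) - blk_part blk i (xs k)))\<^sup>2
           \<le> f i (y + blk_rest blk i (gs_point blk xs k i))
             + \<tau> k * (norm (y - blk_part blk i (xs k)))\<^sup>2)"
    and x_conv: "xs \<longlonglongrightarrow> xstar"
    and tau_conv: "\<tau> \<longlonglongrightarrow> 0"
    and isc: "\<forall>i<N. inner_semicont_rel (feas_set blk s g i) (dom_G blk s g i)"
  shows "is_GNE N blk f s g xstar"
  unfolding is_GNE_def
proof (intro allI impI conjI ballI)
  fix i assume i: "i < N"
  define z where "z k = blk_rest blk i (gs_point blk xs k i)" for k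
  define w where "w k = blk_part blk i (xs (Suc k))" for k
  have z_lim: "z \<longlonglongrightarrow> blk_rest blk i xstar"
    unfolding z_def by (intro tendsto_blk_rest tendsto_gs_point x_conv)
  have w_lim: "w \<longlonglongrightarrow> blk_part blk i xstar"
    unfolding w_def by (intro tendsto_blk_part LIMSEQ_Suc x_conv)
  have w_feas: "w k \<in> feas_set blk s g i (z k)" for k
    using gs_min i unfolding w_def z_def by blast
  show feas: "blk_part blk i xstar \<in> feas_set blk s g i (blk_rest blk i xstar)"
    by (rule feas_set_closed_graph[OF poly_fun_isCont[OF g_poly[rule_format, OF i]]
          w_feas w_lim z_lim])
  fix y assume y: "y \<in> feas_set blk s g i (blk_rest blk i xstar)"
  have \<tau>_nonneg: "\<tau> k \<ge> 0" for k
    using tau0 tau_step by (cases k) auto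
  have prox_min: "f i (w k + z k) + \<tau> k * (norm (w k - blk_part blk i (xs k)))\<^sup>2
      \<le> f i (y' + z k) + \<tau> k * (norm (y' - blk_part blk i (xs k)))\<^sup>2"
    if "y' \<in> feas_set blk s g i (z k)" for k y'
    using gs_min i that unfolding w_def z_def by blast
  have z_dom: "z k \<in> dom_G blk s g i" for k
    using feas_set_in_dom_G w_feas unfolding z_def by blast
  have "f i (blk_part blk i xstar + blk_rest blk i xstar) \<le> f i (y + blk_rest blk i xstar)"
    by (rule proximal_minimizers_limit_minimal[OF isc[rule_format, OF i] z_dom
          feas_set_in_dom_G[OF feas] z_lim w_lim tendsto_blk_part[OF x_conv] tau_conv \<tau>_nonneg
          poly_fun_isCont[OF f_poly[rule_format, OF i]] prox_min y])
  then show "f i xstar \<le> f i (y + blk_rest blk i xstar)"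
    by (simp add: blk_part_add_blk_rest)
qed

end
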